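(* Let $a\neq 0$ be a real number and let $(P_n(x))_{n\ge0}$ be a sequence of polynomials such that $$\sum_{n\ge0}P_n(x)\frac{t^n}{n!}=f(t)e^{xt}$$ for some $f$ holomorphic at $0$ with $f(0)\neq0$, and such that $P_n(a-x)=(-1)^nP_n(x)$ for all $n\ge0$. Let $(a_k)_{k\in\mathbb{N}}$ be a sequence of real numbers such that the power series $F(t)=f(t)-\sum_{k\ge0}a_k\frac{t^k}{k!}$ (with $f$ replaced by its Taylor series at $0$) is odd or even. Then for every $n\ge0$: $$P_n(x)=\sum_{\substack{0\le k\le n\\ k\text{ even}}}a_k\binom{n}{k}a^{n-k}E_{n-k}\!\left(\frac{x}{a}\right)\quad\text{if }F\text{ is odd},$$ $$P_n(x)=-2\sum_{\substack{1\le k\le n+1\\ k\text{ odd}}}\frac{a_k}{k}\binom{n}{k-1}a^{n-k}B_{n-k+1}\!\left(\frac{x}{a}\right)\quad\text{if }F\text{ is even}.$$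
   Context: $B_n(x)$ and $E_n(x)$ denote the Bernoulli and Euler polynomials, defined by $\sum_{n\ge0}B_n(x)\frac{t^n}{n!}=\frac{te^{xt}}{e^t-1}$ and $\sum_{n\ge0}E_n(x)\frac{t^n}{n!}=\frac{2e^{xt}}{e^t+1}$. *)

theory Defs
  imports "HOL-Analysis.Analysis" "HOL-Computational_Algebra.Formal_Power_Series"
    "HOL-Computational_Algebra.Polynomial"
begin

definition bernpoly :: "nat \<Rightarrow> real \<Rightarrow> real" where
  "bernpoly n x = fact n * fps_nth (fps_X * fps_exp x / (fps_exp 1 - 1)) n"

definition eulerpoly :: "nat \<Rightarrow> real \<Rightarrow> real" where
  "eulerpoly n x = fact n * fps_nth (2 * fps_exp x / (fps_exp 1 + 1)) n"

definition taylor_fps :: "(complex \<Rightarrow> complex) \<Rightarrow> complex fps" where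
  "taylor_fps f = Abs_fps (\<lambda>k. (deriv ^^ k) f 0 / fact k)"

text \<open>A formal power series F is odd (F(-t) = -F(t)) iff its even coefficients vanish,
  even (F(-t) = F(t)) iff its odd coefficients vanish.\<close>
definition fps_is_odd :: "'a::comm_ring_1 fps \<Rightarrow> bool" where
  "fps_is_odd F \<longleftrightarrow> (\<forall>k. even k \<longrightarrow> fps_nth F k = 0)"

definition fps_is_even :: "'a::comm_ring_1 fps \<Rightarrow> bool" where
  "fps_is_even F \<longleftrightarrow> (\<forall>k. odd k \<longrightarrow> fps_nth F k = 0)"

end

theory Submission
  imports Defs
begin

text \<open>
  In terms of exponential generating functions (EGFs), the expansion hypothesis says that the EGF
  of \<open>P\<^sub>n(x)\<close> is \<open>T(t) e\<^sup>x\<^sup>t\<close>, with \<open>T\<close> the Taylor series of \<open>f\<close>, and the symmetry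
  \<open>P\<^sub>n(a - x) = (-1)\<^sup>n P\<^sub>n(x)\<close> at \<open>x = 0\<close> becomes \<open>T(t) e\<^sup>a\<^sup>t = T(-t)\<close>.
  If \<open>T - C\<close> is odd (\<open>C\<close> the EGF of the \<open>a\<^sub>k\<close>), then \<open>T(t) + T(-t)\<close> is twice the even part
  \<open>C\<^sub>e\<close> of \<open>C\<close>, so \<open>T(t) (e\<^sup>a\<^sup>t + 1) = 2 C\<^sub>e(t)\<close> and \<open>T(t) e\<^sup>x\<^sup>t = C\<^sub>e(t) \<cdot> 2 e\<^sup>x\<^sup>t / (e\<^sup>a\<^sup>t + 1)\<close>,
  the product of \<open>C\<^sub>e\<close> with the Euler EGF at \<open>x / a\<close> rescaled by \<open>t \<mapsto> a t\<close>; comparing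
  coefficients gives the first formula. If \<open>T - C\<close> is even, \<open>T(t) (e\<^sup>a\<^sup>t - 1) = -2 C\<^sub>o(t)\<close> and
  multiplying by \<open>a t\<close> brings in the Bernoulli EGF in the same way.
\<close>

definition fps_egf :: "(nat \<Rightarrow> 'a::field_char_0) \<Rightarrow> 'a fps" where
  "fps_egf s = Abs_fps (\<lambda>n. s n / fact n)"

lemma fps_egf_nth [simp]: "fps_nth (fps_egf s) n = s n / fact n"
  by (simp add: fps_egf_def)

lemma fps_egf_eq_iff: "fps_egf s = fps_egf u \<longleftrightarrow> s = u"
  by (auto simp: fps_eq_iff)

lemma fps_egf_mult:
  "fps_egf s * fps_egf u = fps_egf (\<lambda>n. \<Sum>k\<le>n. of_nat (n choose k) * s k * u (n - k))"
proof (rule fps_ext)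
  fix n
  have "s k / fact k * (u (n - k) / fact (n - k)) = of_nat (n choose k) * s k * u (n - k) / fact n"
    if "k \<le> n" for k
  proof -
    have "(fact n :: 'a) = fact k * fact (n - k) * of_nat (n choose k)"
      using binomial_fact_lemma[OF that] by (metis of_nat_fact of_nat_mult)
    moreover have "(of_nat (n choose k) :: 'a) \<noteq> 0"
      using that by simp
    ultimately show ?thesis
      by (simp add: divide_simps)
  qed
  then show "fps_nth (fps_egf s * fps_egf u) n = fps_nth (fps_egf (\<lambda>n. \<Sum>k\<le>n. of_nat (n choose k) * s k * u (n - k))) n"
    by (simp add: fps_mult_nth atLeast0AtMost sum_divide_distrib)
qed

lemma fps_egf_compose_linear:
  "fps_egf s oo (fps_const a * fps_X) = fps_egf (\<lambda>n. a ^ n * s n)"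
  by (simp add: fps_compose_linear fps_egf_def)

lemma fps_egf_compose_uminus_X:
  "fps_egf s oo - fps_X = fps_egf (\<lambda>n. (-1) ^ n * s n)"
  by (simp add: fps_compose_uminus' fps_egf_def)

definition fps_of_real :: "real fps \<Rightarrow> 'a::real_algebra_1 fps" where
  "fps_of_real F = Abs_fps (\<lambda>n. of_real (fps_nth F n))"

lemma fps_of_real_nth [simp]: "fps_nth (fps_of_real F) n = of_real (fps_nth F n)"
  by (simp add: fps_of_real_def)

lemma fps_of_real_eq_iff [simp]: "fps_of_real F = fps_of_real G \<longleftrightarrow> F = G"
  by (simp add: fps_eq_iff)

lemma fps_of_real_diff: "fps_of_real (F - G) = fps_of_real F - fps_of_real G"
  by (rule fps_ext) simp

lemma fps_of_real_mult: "fps_of_real (F * G) = fps_of_real F * fps_of_real G"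
  by (rule fps_ext) (simp add: fps_mult_nth)

lemma fps_of_real_exp: "fps_of_real (fps_exp x) = (fps_exp (of_real x) :: 'a::real_field fps)"
  by (rule fps_ext) (simp add: fps_exp_def)

lemma fps_of_real_egf: "fps_of_real (fps_egf s) = (fps_egf (\<lambda>n. of_real (s n)) :: 'a::real_field fps)"
  by (rule fps_ext) simp

lemma fps_is_odd_of_real [simp]: "fps_is_odd (fps_of_real F :: 'a::{real_algebra_1,comm_ring_1} fps) \<longleftrightarrow> fps_is_odd F"
  by (simp add: fps_is_odd_def)

lemma fps_is_even_of_real [simp]: "fps_is_even (fps_of_real F :: 'a::{real_algebra_1,comm_ring_1} fps) \<longleftrightarrow> fps_is_even F"
  by (simp add: fps_is_even_def)

lemma fps_add_compose_uminus_X: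
  fixes T :: "'a::field_char_0 fps"
  assumes "fps_is_odd (T - fps_egf c)"
  shows "T + (T oo - fps_X) = 2 * fps_egf (\<lambda>k. if even k then c k else 0)"
proof (rule fps_ext)
  fix k
  have "even k \<Longrightarrow> fps_nth T k = c k / fact k"
    using assms by (simp add: fps_is_odd_def)
  moreover have "fps_nth (T oo - fps_X) k = (-1) ^ k * fps_nth T k"
    by (simp add: fps_compose_uminus')
  ultimately show "fps_nth (T + (T oo - fps_X)) k = fps_nth (2 * fps_egf (\<lambda>k. if even k then c k else 0)) k"
    by (cases "even k") (simp_all add: numeral_fps_const)
qed

lemma fps_diff_compose_uminus_X:
  fixes T :: "'a::field_char_0 fps"
  assumes "fps_is_even (T - fps_egf c)"
  shows "T - (T oo - fps_X) = 2 * fps_egf (\<lambda>k. if odd k then c k else 0)"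
proof (rule fps_ext)
  fix k
  have "odd k \<Longrightarrow> fps_nth T k = c k / fact k"
    using assms by (simp add: fps_is_even_def)
  moreover have "fps_nth (T oo - fps_X) k = (-1) ^ k * fps_nth T k"
    by (simp add: fps_compose_uminus')
  ultimately show "fps_nth (T - (T oo - fps_X)) k = fps_nth (2 * fps_egf (\<lambda>k. if odd k then c k else 0)) k"
    by (cases "even k") (simp_all add: numeral_fps_const)
qed

lemma fps_egf_eulerpoly_times: "fps_egf (\<lambda>n. eulerpoly n y) * (fps_exp 1 + 1) = 2 * fps_exp y"
proof -
  have "fps_egf (\<lambda>n. eulerpoly n y) = 2 * fps_exp y / (fps_exp 1 + 1)"
    by (rule fps_ext) (simp add: eulerpoly_def)
  then show ?thesis
    by (simp add: fps_times_divide_eq fps_eq_iff[of _ 0] exI[of _ 0])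
qed

lemma fps_egf_bernpoly_times: "fps_egf (\<lambda>n. bernpoly n y) * (fps_exp 1 - 1) = fps_X * fps_exp y"
proof -
  have egf: "fps_egf (\<lambda>n. bernpoly n y) = fps_X * fps_exp y / (fps_exp 1 - 1)"
    by (rule fps_ext) (simp add: bernpoly_def)
  have nth1: "fps_nth (fps_exp 1 - 1 :: real fps) 1 = 1"
    by simp
  then have "fps_exp 1 - 1 \<noteq> (0 :: real fps)"
    by auto
  moreover have "subdegree (fps_exp 1 - 1 :: real fps) \<le> subdegree (fps_X * fps_exp y :: real fps)"
    using nth1 by (auto intro: subdegree_leI simp: subdegree_mult)
  ultimately show ?thesis
    unfolding egf by (rule fps_times_divide_eq)
qed

lemma sum_atMost_if_eq_sum_filter:
  fixes n :: nat
  shows "(\<Sum>k\<le>n. if P k then f k else 0) = (\<Sum>k | k \<le> n \<and> P k. f k)"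
proof -
  have "(\<Sum>k\<le>n. if P k then f k else 0) = sum f {k \<in> {..n}. P k}"
    by (rule sum.inter_filter[symmetric]) simp
  also have "{k \<in> {..n}. P k} = {k. k \<le> n \<and> P k}"
    by auto
  finally show ?thesis .
qed

lemma appell_euler_expansion:
  fixes T :: "real fps"
  assumes "a \<noteq> 0" and reflect: "T * fps_exp a = T oo - fps_X" and odd: "fps_is_odd (T - fps_egf c)"
  shows "T * fps_exp x = fps_egf (\<lambda>n. \<Sum>k | k \<le> n \<and> even k.
           c k * of_nat (n choose k) * a ^ (n - k) * eulerpoly (n - k) (x / a))"
proof -
  define C where "C = fps_egf (\<lambda>k. if even k then c k else 0)"
  define H where "H = fps_egf (\<lambda>n. eulerpoly n (x / a)) oo (fps_const a * fps_X)"
  have "H * (fps_exp a + 1) = (fps_egf (\<lambda>n. eulerpoly n (x / a)) * (fps_exp 1 + 1)) oo (fps_const a * fps_X)"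
    by (simp add: H_def fps_compose_mult_distrib fps_compose_add_distrib)
  also have "\<dots> = 2 * fps_exp x"
    using \<open>a \<noteq> 0\<close> by (simp add: fps_egf_eulerpoly_times fps_compose_mult_distrib)
  finally have H: "H * (fps_exp a + 1) = 2 * fps_exp x" .
  have "T * fps_exp x * (fps_exp a + 1) = fps_exp x * (T + (T oo - fps_X))"
    by (simp add: reflect[symmetric] algebra_simps)
  also have "\<dots> = C * H * (fps_exp a + 1)"
    by (simp add: fps_add_compose_uminus_X[OF odd] H C_def mult_ac)
  moreover have "fps_nth (fps_exp a + 1) 0 = 2"
    by simp
  then have "fps_exp a + 1 \<noteq> 0"
    by (metis fps_zero_nth zero_neq_numeral)
  ultimately have "T * fps_exp x = C * H"
    by simp
  also have "\<dots> = fps_egf (\<lambda>n. \<Sum>k | k \<le> n \<and> even k.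
                c k * of_nat (n choose k) * a ^ (n - k) * eulerpoly (n - k) (x / a))"
    unfolding C_def H_def fps_egf_compose_linear fps_egf_mult
    by (intro arg_cong[where f = fps_egf] ext, subst sum_atMost_if_eq_sum_filter[symmetric])
       (auto intro!: sum.cong)
  finally show ?thesis .
qed

lemma appell_bernoulli_times_X:
  fixes T :: "real fps"
  assumes "a \<noteq> 0" and reflect: "T * fps_exp a = T oo - fps_X" and even: "fps_is_even (T - fps_egf c)"
  shows "T * fps_exp x * (fps_const a * fps_X) = fps_egf (\<lambda>n. - 2 * (\<Sum>k\<le>n.
           of_nat (n choose k) * (if odd k then c k else 0) * (a ^ (n - k) * bernpoly (n - k) (x / a))))"
proof -
  define C where "C = fps_egf (\<lambda>k. if odd k then c k else 0)"
  define B where "B = fps_egf (\<lambda>n. bernpoly n (x / a)) oo (fps_const a * fps_X)"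
  have "B * (fps_exp a - 1) = (fps_egf (\<lambda>n. bernpoly n (x / a)) * (fps_exp 1 - 1)) oo (fps_const a * fps_X)"
    by (simp add: B_def fps_compose_mult_distrib fps_compose_sub_distrib)
  also have "\<dots> = fps_const a * fps_X * fps_exp x"
    using \<open>a \<noteq> 0\<close> by (simp add: fps_egf_bernpoly_times fps_compose_mult_distrib)
  finally have B: "B * (fps_exp a - 1) = fps_const a * fps_X * fps_exp x" .
  have "(T oo - fps_X) - T = - 2 * C"
    using fps_diff_compose_uminus_X[OF even] unfolding C_def by (metis minus_diff_eq mult_minus_left)
  have "T * fps_exp x * (fps_const a * fps_X) * (fps_exp a - 1)
          = fps_const a * fps_X * fps_exp x * ((T oo - fps_X) - T)"
    by (simp add: reflect[symmetric] algebra_simps)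
  also have "\<dots> = - 2 * C * B * (fps_exp a - 1)"
    unfolding \<open>(T oo - fps_X) - T = - 2 * C\<close> B[symmetric] by (simp add: mult_ac)
  finally have "T * fps_exp x * (fps_const a * fps_X) * (fps_exp a - 1) = - 2 * C * B * (fps_exp a - 1)" .
  moreover have "fps_nth (fps_exp a - 1) 1 = a"
    by simp
  then have "fps_exp a - 1 \<noteq> 0"
    using \<open>a \<noteq> 0\<close> by (metis fps_zero_nth)
  ultimately have "T * fps_exp x * (fps_const a * fps_X) = - 2 * C * B"
    using mult_right_cancel by blast
  also have "\<dots> = fps_egf (\<lambda>n. - 2 * (\<Sum>k\<le>n.
           of_nat (n choose k) * (if odd k then c k else 0) * (a ^ (n - k) * bernpoly (n - k) (x / a))))"
    unfolding C_def B_def fps_egf_compose_linear mult.assoc fps_egf_mult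
    by (rule fps_ext) (simp add: numeral_fps_const)
  finally show ?thesis .
qed

lemma binomial_Suc_power_eq:
  fixes a :: real
  assumes "a \<noteq> 0" and "1 \<le> k" and "k \<le> Suc n"
  shows "of_nat (Suc n choose k) * a ^ (Suc n - k)
           = of_nat (Suc n) * a * (of_nat (n choose (k - 1)) / of_nat k * a powi (int n - int k))"
proof -
  obtain j where k: "k = Suc j"
    using \<open>1 \<le> k\<close> by (cases k) auto
  have binomial: "real (Suc n choose k) * real k = real (Suc n) * real (n choose j)"
    using Suc_times_binomial_eq[of n j] unfolding k by (metis of_nat_mult)
  have "int n - int k = int (n - j) - 1"
    using assms(3) by (simp add: k)
  then have "a powi (int n - int k) = a powi int (n - j) / a powi 1"
    by (simp only: power_int_diff[OF disjI1[OF assms(1)]])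
  then have power: "a powi (int n - int k) * a = a ^ (Suc n - k)"
    using assms(1) by (simp add: k)
  have "real (Suc n choose k) = real (Suc n) * real (n choose j) / real k"
    using binomial assms(2) by (simp add: eq_divide_eq)
  moreover have "k - 1 = j"
    using k by simp
  ultimately show ?thesis
    by (simp flip: power add: mult_ac)
qed

lemma sum_binomial_Suc_odd_eq:
  fixes a :: real
  assumes "a \<noteq> 0"
  shows "(\<Sum>k\<le>Suc n. of_nat (Suc n choose k) * (if odd k then c k else 0) * (a ^ (Suc n - k) * b (Suc n - k)))
    = of_nat (Suc n) * a * (\<Sum>k | 1 \<le> k \<and> k \<le> n + 1 \<and> odd k.
        c k / of_nat k * of_nat (n choose (k - 1)) * a powi (int n - int k) * b (n + 1 - k))"
proof -
  have "of_nat (Suc n choose k) * (if odd k then c k else 0) * (a ^ (Suc n - k) * b (Suc n - k))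
      = of_nat (Suc n) * a * (if odd k then c k / of_nat k * of_nat (n choose (k - 1))
          * a powi (int n - int k) * b (n + 1 - k) else 0)"
  if "k \<le> Suc n" for k
  proof (cases "odd k")
    case True
    then have "1 \<le> k"
      by (cases k) auto
    have "of_nat (Suc n choose k) * c k * (a ^ (Suc n - k) * b (Suc n - k))
        = c k * b (Suc n - k) * (of_nat (Suc n choose k) * a ^ (Suc n - k))"
      by (simp only: mult_ac)
    also have "\<dots> = c k * b (Suc n - k) * (of_nat (Suc n) * a * (of_nat (n choose (k - 1)) / of_nat k * a powi (int n - int k)))"
      by (simp only: binomial_Suc_power_eq[OF assms \<open>1 \<le> k\<close> that])
    finally show ?thesis
      using True by (simp add: mult_ac)
  qed simp
  then have "(\<Sum>k\<le>Suc n. of_nat (Suc n choose k) * (if odd k then c k else 0) * (a ^ (Suc n - k) * b (Suc n - k)))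
      = of_nat (Suc n) * a * (\<Sum>k\<le>Suc n. if odd k then c k / of_nat k * of_nat (n choose (k - 1))
          * a powi (int n - int k) * b (n + 1 - k) else 0)"
    unfolding sum_distrib_left by (intro sum.cong refl) auto
  also have "{k. k \<le> Suc n \<and> odd k} = {k. 1 \<le> k \<and> k \<le> n + 1 \<and> odd k}"
    by (auto elim!: oddE)
  ultimately show ?thesis
    by (simp add: sum_atMost_if_eq_sum_filter)
qed

lemma appell_bernoulli_expansion:
  fixes T :: "real fps"
  assumes "a \<noteq> 0" and "T * fps_exp a = T oo - fps_X" and "fps_is_even (T - fps_egf c)"
  shows "T * fps_exp x = fps_egf (\<lambda>n. - 2 * (\<Sum>k | 1 \<le> k \<and> k \<le> n + 1 \<and> odd k.
           c k / of_nat k * of_nat (n choose (k - 1)) * a powi (int n - int k) * bernpoly (n + 1 - k) (x / a)))"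
    (is "_ = fps_egf (\<lambda>n. - 2 * ?S n)")
proof (rule fps_ext)
  fix n
  have "a * fps_nth (T * fps_exp x) n = fps_nth (T * fps_exp x * (fps_const a * fps_X)) (Suc n)"
    by (simp add: mult.assoc[symmetric])
  also have "\<dots> = - 2 * (\<Sum>k\<le>Suc n. of_nat (Suc n choose k) * (if odd k then c k else 0)
                      * (a ^ (Suc n - k) * bernpoly (Suc n - k) (x / a))) / fact (Suc n)"
    unfolding appell_bernoulli_times_X[OF assms] by simp
  also have "\<dots> = - 2 * (of_nat (Suc n) * a * ?S n) / (of_nat (Suc n) * fact n)"
    by (subst sum_binomial_Suc_odd_eq[OF \<open>a \<noteq> 0\<close>]) (simp only: fact_Suc)
  also have "\<dots> = a * fps_nth (fps_egf (\<lambda>n. - 2 * ?S n)) n"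
    by (simp del: of_nat_Suc)
  finally show "fps_nth (T * fps_exp x) n = fps_nth (fps_egf (\<lambda>n. - 2 * ?S n)) n"
    using \<open>a \<noteq> 0\<close> mult_left_cancel by blast
qed

lemma has_fps_expansion_of_egf_sums:
  fixes g :: "complex \<Rightarrow> complex" and s :: "nat \<Rightarrow> real"
  assumes "\<exists>r>0. \<forall>t. norm t < r \<longrightarrow> (\<lambda>n. of_real (s n) * t ^ n / fact n) sums g t"
  shows "g has_fps_expansion fps_of_real (fps_egf s)"
proof (rule has_fps_expansionI)
  from assms obtain r where "r > 0" and r: "\<And>t. norm t < r \<Longrightarrow> (\<lambda>n. of_real (s n) * t ^ n / fact n) sums g t"
    by blast
  from eventually_nhds_ball[OF \<open>r > 0\<close>, of 0]
  show "\<forall>\<^sub>F t in nhds 0. (\<lambda>n. fps_nth (fps_of_real (fps_egf s)) n * t ^ n) sums g t"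
    by eventually_elim (use r in \<open>simp add: field_simps\<close>)
qed

lemma taylor_fps_eqI: "f has_fps_expansion F \<Longrightarrow> taylor_fps f = F"
  by (simp add: taylor_fps_def fps_eq_iff fps_nth_fps_expansion)

theorem mainTheorem4:
  fixes a :: real and P :: "nat \<Rightarrow> real poly" and f :: "complex \<Rightarrow> complex"
    and c :: "nat \<Rightarrow> real"
  assumes "a \<noteq> 0"
    and "f analytic_on {0}" and "f 0 \<noteq> 0"
    and "\<forall>x::real. \<exists>r>0. \<forall>t::complex. norm t < r \<longrightarrow>
           (\<lambda>n. complex_of_real (poly (P n) x) * t ^ n / fact n) sums (f t * exp (complex_of_real x * t))"
    and "\<forall>n x. poly (P n) (a - x) = (-1) ^ n * poly (P n) x"
  shows "(fps_is_odd (taylor_fps f - Abs_fps (\<lambda>k. complex_of_real (c k) / fact k)) \<longrightarrow>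
            (\<forall>n x. poly (P n) x =
               (\<Sum>k | k \<le> n \<and> even k. c k * of_nat (n choose k) * a ^ (n - k) * eulerpoly (n - k) (x / a))))
       \<and> (fps_is_even (taylor_fps f - Abs_fps (\<lambda>k. complex_of_real (c k) / fact k)) \<longrightarrow>
            (\<forall>n x. poly (P n) x =
               - 2 * (\<Sum>k | 1 \<le> k \<and> k \<le> n + 1 \<and> odd k.
                   c k / of_nat k * of_nat (n choose (k - 1)) * a powi (int n - int k)
                   * bernpoly (n + 1 - k) (x / a))))"
proof -
  define T where "T = fps_egf (\<lambda>n. poly (P n) 0)"
  have expansion: "(\<lambda>t. f t * exp (of_real x * t)) has_fps_expansion fps_of_real (fps_egf (\<lambda>n. poly (P n) x))" for x
    using assms(4) by (intro has_fps_expansion_of_egf_sums) blast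
  have f: "f has_fps_expansion fps_of_real T"
    using expansion[of 0] by (simp add: T_def)
  have appell: "fps_egf (\<lambda>n. poly (P n) x) = T * fps_exp x" for x
    using taylor_fps_eqI[OF expansion[of x]]
      taylor_fps_eqI[OF has_fps_expansion_mult[OF f has_fps_expansion_exp[of "of_real x"]]]
    by (simp flip: fps_of_real_mult fps_of_real_exp)
  have "T * fps_exp a = fps_egf (\<lambda>n. poly (P n) (a - 0))"
    by (simp add: appell)
  also have "\<dots> = T oo - fps_X"
    using assms(5) by (simp only: T_def fps_egf_compose_uminus_X)
  finally have reflect: "T * fps_exp a = T oo - fps_X" .
  have F: "taylor_fps f - Abs_fps (\<lambda>k. of_real (c k) / fact k) = fps_of_real (T - fps_egf c)"
    by (simp add: taylor_fps_eqI[OF f] fps_of_real_diff fps_of_real_egf) (simp add: fps_egf_def)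
  show ?thesis
    unfolding F fps_is_odd_of_real fps_is_even_of_real
    using appell_euler_expansion[OF assms(1) reflect] appell_bernoulli_expansion[OF assms(1) reflect]
    by (simp flip: appell add: fps_egf_eq_iff fun_eq_iff)
qed

end
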